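(* Let $\bm{H}\in\mathbb{R}^{n\times n}$ be symmetric positive definite, and let $$\mathbf{M}=\begin{bmatrix}(1+\beta)(\mathbf{I}_n-\eta\bm{H}) & \beta(-\mathbf{I}_n+\eta\bm{H})\\ \mathbf{I}_n & \mathbf{0}_n\end{bmatrix}\in\mathbb{R}^{2n\times 2n}.$$ Suppose $0<\eta\le 1/\lambda_{\max}(\bm{H})$ and $1>\beta\ge\frac{1-\sqrt{\eta\lambda_{\min}(\bm{H})}}{1+\sqrt{\eta\lambda_{\min}(\bm{H})}}$, and let $\mathbf{v}_t=\mathbf{M}\mathbf{v}_{t-1}$ for $t\le T$. Then for every $k\le T$, $$\|\mathbf{v}_k\|\le C\Big(\sqrt{\beta(1-\eta\lambda_{\min}(\bm{H}))}\Big)^k\|\mathbf{v}_0\|,\qquad C=\frac{2\beta(1-\eta\lambda_{\min}(\bm{H}))+2}{\sqrt{\min\{g(\beta,\eta\lambda_{\min}(\bm{H})),\,g(\beta,\eta\lambda_{\max}(\bm{H}))\}}},$$ where $g(x,y)=4x(1-y)-[(1+x)(1-y)]^2$.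
   Context: $\lambda_{\min}(\cdot)$, $\lambda_{\max}(\cdot)$ denote smallest and largest eigenvalues; $\|\cdot\|$ is the Euclidean norm; $\mathbf{I}_n$, $\mathbf{0}_n$ are the $n\times n$ identity and zero matrices. *)

theory Defs
  imports "HOL-Analysis.Analysis"
begin

definition is_eigenvalue :: "real^'n^'n \<Rightarrow> real \<Rightarrow> bool" where
  "is_eigenvalue A c \<longleftrightarrow> (\<exists>x. x \<noteq> 0 \<and> A *v x = c *\<^sub>R x)"

definition lambda_min :: "real^'n^'n \<Rightarrow> real" where
  "lambda_min A = Min {c. is_eigenvalue A c}"

definition lambda_max :: "real^'n^'n \<Rightarrow> real" where
  "lambda_max A = Max {c. is_eigenvalue A c}"

definition symmetric_pd :: "real^'n^'n \<Rightarrow> bool" where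
  "symmetric_pd H \<longleftrightarrow> transpose H = H \<and> (\<forall>x. x \<noteq> 0 \<longrightarrow> x \<bullet> (H *v x) > 0)"

text \<open>The 2n x 2n block matrix M, with block index type 'n + 'n
  (Inl = first block, Inr = second block).\<close>
definition blockM :: "real \<Rightarrow> real \<Rightarrow> real^'n^'n \<Rightarrow> real^('n + 'n)^('n + 'n)" where
  "blockM \<beta> \<eta> H = (\<chi> i j. case (i, j) of
      (Inl a, Inl b) \<Rightarrow> (1 + \<beta>) * ((mat 1 :: real^'n^'n) $ a $ b - \<eta> * H $ a $ b)
    | (Inl a, Inr b) \<Rightarrow> \<beta> * (- (mat 1 :: real^'n^'n) $ a $ b + \<eta> * H $ a $ b)
    | (Inr a, Inl b) \<Rightarrow> (mat 1 :: real^'n^'n) $ a $ b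
    | (Inr a, Inr b) \<Rightarrow> 0)"

definition gfun :: "real \<Rightarrow> real \<Rightarrow> real" where
  "gfun x y = 4 * x * (1 - y) - ((1 + x) * (1 - y))^2"

end

(* Diagonalise H in an orthonormal eigenbasis (spectral theorem, via maximising the quadratic
   form on invariant subspaces). Along an eigenvector u with eigenvalue mu, the coordinates
   p_t, q_t of the two blocks of v_t against u satisfy p_(t+1) = tau p_t - delta q_t and
   q_(t+1) = p_t, where tau = (1+beta)(1-eta mu) and delta = beta(1-eta mu). The quadratic form
   p^2 - tau p q + delta q^2 is multiplied by delta in every step, and since
   g(beta, eta mu) = 4 delta - tau^2 > 0 it is comparable to p^2 + q^2 with the constants 1 + delta
   and (4 delta - tau^2) / (4 (1 + delta)). As g(beta, .) is concave, its minimum over the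
   spectrum is attained at lambda_min or lambda_max; summing the bounds over the eigenbasis
   (Parseval) gives the claim. *)

theory Submission
  imports Defs
begin

lemma inner_matrix_vector_symmetric:
  fixes H :: "real^'n^'n"
  assumes "transpose H = H"
  shows "(H *v x) \<bullet> y = x \<bullet> (H *v y)"
  by (metis assms dot_lmul_matrix vector_transpose_matrix)

lemma quadratic_nonneg_imp_linear_coeff_zero:
  fixes b c :: real
  assumes "\<And>t. 0 \<le> 2 * b * t + c * t\<^sup>2"
  shows "b = 0"
proof (rule ccontr)
  assume "b \<noteq> 0"
  define d where "d = \<bar>c\<bar> + 1"
  have d: "d > 0" "c - 2 * d < 0" unfolding d_def by (simp_all add: abs_if)
  have "2 * b * (- b / d) + c * (- b / d)\<^sup>2 = b\<^sup>2 / d\<^sup>2 * (c - 2 * d)"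
    using d by (simp add: field_simps power2_eq_square)
  also have "\<dots> < 0"
    using \<open>b \<noteq> 0\<close> d by (intro mult_pos_neg) auto
  finally show False using assms[of "- b / d"] by linarith
qed

lemma symmetric_max_quadratic_form_eigenvector:
  fixes H :: "real^'n^'n"
  assumes sym: "transpose H = H" and S: "subspace S"
    and invariant: "\<And>w. w \<in> S \<Longrightarrow> H *v w \<in> S"
    and x: "x \<in> S" "x \<bullet> x = 1"
    and max: "\<And>w. w \<in> S \<Longrightarrow> w \<bullet> (H *v w) \<le> (x \<bullet> (H *v x)) * (w \<bullet> w)"
  shows "H *v x = (x \<bullet> (H *v x)) *\<^sub>R x"
proof -
  define \<mu> where "\<mu> = x \<bullet> (H *v x)"
  have orth: "y \<bullet> (H *v x - \<mu> *\<^sub>R x) = 0" if y: "y \<in> S" for y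
  proof -
    have "0 \<le> 2 * (\<mu> * (x \<bullet> y) - y \<bullet> (H *v x)) * t + (\<mu> * (y \<bullet> y) - y \<bullet> (H *v y)) * t\<^sup>2"
      for t
    proof -
      have "x + t *\<^sub>R y \<in> S" using x y S by (simp add: subspace_add subspace_scale)
      from max[OF this]
      have "(x + t *\<^sub>R y) \<bullet> (H *v (x + t *\<^sub>R y)) \<le> \<mu> * ((x + t *\<^sub>R y) \<bullet> (x + t *\<^sub>R y))"
        by (simp add: \<mu>_def)
      moreover have "x \<bullet> (H *v y) = y \<bullet> (H *v x)"
        using inner_matrix_vector_symmetric[OF sym, of y x] by (simp add: inner_commute)
      ultimately show ?thesis
        using x by (simp add: matrix_vector_right_distrib matrix_vector_mult_scaleR inner_add_left
            inner_add_right \<mu>_def algebra_simps power2_eq_square inner_commute)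
    qed
    then have "\<mu> * (x \<bullet> y) - y \<bullet> (H *v x) = 0"
      by (rule quadratic_nonneg_imp_linear_coeff_zero)
    then show ?thesis by (simp add: inner_diff_right algebra_simps inner_commute)
  qed
  have "H *v x - \<mu> *\<^sub>R x \<in> S" using invariant x S by (simp add: subspace_diff subspace_scale)
  from orth[OF this] show ?thesis by (simp add: \<mu>_def)
qed

lemma symmetric_invariant_subspace_eigenvector:
  fixes H :: "real^'n^'n"
  assumes sym: "transpose H = H" and S: "subspace S"
    and invariant: "\<And>w. w \<in> S \<Longrightarrow> H *v w \<in> S" and "S \<noteq> {0}"
  obtains x where "x \<in> S" "norm x = 1" "H *v x = (x \<bullet> (H *v x)) *\<^sub>R x"
proof -
  let ?K = "S \<inter> sphere 0 1"
  have unit: "w /\<^sub>R norm w \<in> ?K" if "w \<in> S" "w \<noteq> 0" for w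
    using that S by (simp add: subspace_scale norm_divide)
  have cK: "compact ?K"
    using closed_subspace[OF S] by (simp add: closed_Int_compact)
  have ne: "?K \<noteq> {}"
    using unit \<open>S \<noteq> {0}\<close> subspace_0[OF S] by blast
  have cont: "continuous_on ?K (\<lambda>w. w \<bullet> (H *v w))"
    by (intro continuous_intros continuous_on_id linear_continuous_on matrix_vector_mul_linear
          bounded_linear_intros)
  obtain x where x: "x \<in> ?K"
    and xmax: "\<And>w. w \<in> ?K \<Longrightarrow> w \<bullet> (H *v w) \<le> x \<bullet> (H *v x)"
    using continuous_attains_sup[OF cK ne cont] by blast
  have xS: "x \<in> S" and x1: "x \<bullet> x = 1" using x by (auto simp: norm_eq_1)
  have bound: "w \<bullet> (H *v w) \<le> (x \<bullet> (H *v x)) * (w \<bullet> w)" if w: "w \<in> S" for w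
  proof (cases "w = 0")
    case False
    from xmax[OF unit[OF w False]]
    have "(w \<bullet> (H *v w)) / (norm w)\<^sup>2 \<le> x \<bullet> (H *v x)"
      by (simp add: matrix_vector_mult_scaleR power2_eq_square divide_simps)
    with False have "w \<bullet> (H *v w) \<le> (x \<bullet> (H *v x)) * (norm w)\<^sup>2"
      by (simp add: divide_simps)
    then show ?thesis by (simp add: power2_norm_eq_inner)
  qed simp
  show ?thesis
    using that xS x x1 symmetric_max_quadratic_form_eigenvector[OF sym S invariant xS x1 bound] by simp
qed

lemma span_insert_orthogonal_complement:
  assumes S: "subspace S" and x: "x \<in> S" "x \<bullet> x = 1" and B: "span B = {w \<in> S. x \<bullet> w = 0}"
  shows "span (insert x B) = S"
proof
  have "B \<subseteq> S" using B span_superset by blast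
  with S x show "span (insert x B) \<subseteq> S" by (simp add: span_minimal)
  show "S \<subseteq> span (insert x B)"
  proof
    fix w assume "w \<in> S"
    then have "w - (x \<bullet> w) *\<^sub>R x \<in> span B"
      using S x B by (simp add: subspace_diff subspace_scale inner_diff_right)
    then have "w - (x \<bullet> w) *\<^sub>R x \<in> span (insert x B)"
      by (metis span_mono subset_insertI subsetD)
    moreover have "(x \<bullet> w) *\<^sub>R x \<in> span (insert x B)" by (simp add: span_base span_mul)
    ultimately show "w \<in> span (insert x B)" by (metis span_add diff_add_cancel)
  qed
qed

lemma symmetric_orthonormal_eigenbasis_subspace:
  fixes H :: "real^'n^'n"
  assumes sym: "transpose H = H" and "subspace S" and "\<And>w. w \<in> S \<Longrightarrow> H *v w \<in> S"
  shows "\<exists>B. B \<subseteq> S \<and> span B = S \<and> pairwise orthogonal B \<and>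
    (\<forall>u\<in>B. norm u = 1 \<and> H *v u = (u \<bullet> (H *v u)) *\<^sub>R u)"
  using assms(2,3)
proof (induction "dim S" arbitrary: S rule: less_induct)
  case less
  show ?case
  proof (cases "S = {0}")
    case True
    then show ?thesis by (intro exI[of _ "{}"]) auto
  next
    case False
    obtain x where xS: "x \<in> S" and x1: "norm x = 1" and ev: "H *v x = (x \<bullet> (H *v x)) *\<^sub>R x"
      using symmetric_invariant_subspace_eigenvector[OF sym less.prems False] by blast
    have xx: "x \<bullet> x = 1" using x1 by (simp add: norm_eq_1)
    define S' where "S' = {w \<in> S. x \<bullet> w = 0}"
    have sub': "subspace S'"
      using less.prems(1) by (auto simp: subspace_def S'_def inner_add_right)
    have inv': "H *v w \<in> S'" if "w \<in> S'" for w
    proof -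
      have "x \<bullet> (H *v w) = (x \<bullet> (H *v x)) * (x \<bullet> w)"
        by (metis ev inner_matrix_vector_symmetric[OF sym] inner_scaleR_left)
      with that less.prems(2) show ?thesis by (simp add: S'_def)
    qed
    have "x \<notin> S'" "S' \<subseteq> S" using xx by (auto simp: S'_def)
    with xS have "S' \<subset> S" by blast
    then have "dim S' < dim S"
      using dim_psubset sub' less.prems(1) by (metis span_eq_iff)
    then obtain B' where B': "B' \<subseteq> S'" "span B' = S'" "pairwise orthogonal B'"
        "\<forall>u\<in>B'. norm u = 1 \<and> H *v u = (u \<bullet> (H *v u)) *\<^sub>R u"
      using less.hyps[OF _ sub' inv'] by blast
    have sub: "insert x B' \<subseteq> S" using B'(1) xS by (auto simp: S'_def)
    have "span (insert x B') = S"
      using span_insert_orthogonal_complement[OF less.prems(1) xS xx] B'(2) by (simp add: S'_def)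
    moreover have "pairwise orthogonal (insert x B')"
      using B'(1,3) by (auto simp: pairwise_insert orthogonal_def S'_def inner_commute)
    ultimately show ?thesis using sub B'(4) xS x1 ev by (intro exI[of _ "insert x B'"]) auto
  qed
qed

lemma symmetric_orthonormal_eigenbasis:
  fixes H :: "real^'n^'n"
  assumes "transpose H = H"
  obtains B where "finite B" "span B = UNIV" "pairwise orthogonal B" "\<And>u. u \<in> B \<Longrightarrow> norm u = 1"
    "\<And>u. u \<in> B \<Longrightarrow> H *v u = (u \<bullet> (H *v u)) *\<^sub>R u"
proof -
  obtain B where B: "span B = UNIV" "pairwise orthogonal B"
    "\<forall>u\<in>B. norm u = 1 \<and> H *v u = (u \<bullet> (H *v u)) *\<^sub>R u"
    using symmetric_orthonormal_eigenbasis_subspace[OF assms, of UNIV] by auto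
  moreover have "0 \<notin> B" using B(3) by force
  ultimately have "finite B"
    using pairwise_orthogonal_independent independent_imp_finite by blast
  with B that show ?thesis by blast
qed

lemma norm_sq_eq_sum_inner_sq:
  assumes "pairwise orthogonal B" "\<And>u. u \<in> B \<Longrightarrow> norm u = 1" "x \<in> span B" "finite B"
  shows "(norm x)\<^sup>2 = (\<Sum>u\<in>B. (x \<bullet> u)\<^sup>2)"
proof -
  have "(norm x)\<^sup>2 = x \<bullet> (\<Sum>u\<in>B. (x \<bullet> u) *\<^sub>R u)"
    by (simp add: orthonormal_basis_expand[OF assms] power2_norm_eq_inner)
  then show ?thesis by (simp add: inner_sum_right power2_eq_square)
qed

lemma eigenvalues_eq_eigenbasis_image:
  fixes H :: "real^'n^'n"
  assumes sym: "transpose H = H" and B: "span B = UNIV" "pairwise orthogonal B"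
    "\<And>u. u \<in> B \<Longrightarrow> norm u = 1" "\<And>u. u \<in> B \<Longrightarrow> H *v u = \<mu> u *\<^sub>R u"
  shows "{c. is_eigenvalue H c} = \<mu> ` B"
proof (intro equalityI subsetI)
  fix c assume "c \<in> {c. is_eigenvalue H c}"
  then obtain w where w: "w \<noteq> 0" "H *v w = c *\<^sub>R w" by (auto simp: is_eigenvalue_def)
  obtain u where u: "u \<in> B" "w \<bullet> u \<noteq> 0"
    using w(1) orthogonal_to_span[of w B w] B(1) by (auto simp: orthogonal_def inner_commute)
  have "c * (w \<bullet> u) = w \<bullet> (H *v u)"
    using w(2) inner_matrix_vector_symmetric[OF sym, of w u] by simp
  also have "\<dots> = w \<bullet> (\<mu> u *\<^sub>R u)" using B(4)[OF u(1)] by (simp only:)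
  also have "\<dots> = \<mu> u * (w \<bullet> u)" by (rule inner_scaleR_right)
  finally have "c = \<mu> u" using u(2) by simp
  with u(1) show "c \<in> \<mu> ` B" by blast
next
  fix c assume "c \<in> \<mu> ` B"
  then obtain u where u: "u \<in> B" "c = \<mu> u" by blast
  have "u \<noteq> 0" using B(3)[OF u(1)] by auto
  with B(4)[OF u(1)] u(2) show "c \<in> {c. is_eigenvalue H c}" by (auto simp: is_eigenvalue_def)
qed

lemma symmetric_pd_eigenbasis:
  fixes H :: "real^'n^'n"
  assumes "symmetric_pd H"
  obtains B \<mu> where "finite B" "span B = UNIV" "pairwise orthogonal B"
    "\<And>u. u \<in> B \<Longrightarrow> norm u = 1" "\<And>u. u \<in> B \<Longrightarrow> H *v u = \<mu> u *\<^sub>R u"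
    "\<And>u. u \<in> B \<Longrightarrow> lambda_min H \<le> \<mu> u" "\<And>u. u \<in> B \<Longrightarrow> \<mu> u \<le> lambda_max H"
    "0 < lambda_min H" "lambda_min H \<le> lambda_max H"
proof -
  have sym: "transpose H = H" and pd: "\<And>x. x \<noteq> 0 \<Longrightarrow> 0 < x \<bullet> (H *v x)"
    using assms unfolding symmetric_pd_def by auto
  define \<mu> where "\<mu> u = u \<bullet> (H *v u)" for u :: "real^'n"
  obtain B where B: "finite B" "span B = UNIV" "pairwise orthogonal B"
    "\<And>u. u \<in> B \<Longrightarrow> norm u = 1" "\<And>u. u \<in> B \<Longrightarrow> H *v u = \<mu> u *\<^sub>R u"
    unfolding \<mu>_def using symmetric_orthonormal_eigenbasis[OF sym] by blast
  have E: "{c. is_eigenvalue H c} = \<mu> ` B"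
    using eigenvalues_eq_eigenbasis_image[OF sym B(2-5)] .
  have lmin: "lambda_min H \<le> \<mu> u" and lmax: "\<mu> u \<le> lambda_max H" if "u \<in> B" for u
    using that B(1) unfolding lambda_min_def lambda_max_def E by auto
  have "B \<noteq> {}"
  proof
    assume "B = {}"
    have "(axis undefined 1 :: real^'n) \<in> span B" using B(2) by simp
    with \<open>B = {}\<close> show False by (simp add: axis_eq_0_iff)
  qed
  then obtain u where u: "u \<in> B" "lambda_min H = \<mu> u"
    using B(1) Min_in unfolding lambda_min_def E by blast
  then have "u \<noteq> 0" using B(4) by force
  then have "0 < lambda_min H" unfolding u(2) \<mu>_def by (rule pd)
  moreover have "lambda_min H \<le> lambda_max H" using lmax u by simp
  ultimately show ?thesis using B lmin lmax that by blast
qed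

definition top_block :: "real^('n + 'n) \<Rightarrow> real^'n" where
  "top_block v = (\<chi> a. v $ Inl a)"

definition bottom_block :: "real^('n + 'n) \<Rightarrow> real^'n" where
  "bottom_block v = (\<chi> a. v $ Inr a)"

lemma sum_UNIV_Plus:
  fixes f :: "'a::finite + 'b::finite \<Rightarrow> 'c::comm_monoid_add"
  shows "sum f UNIV = (\<Sum>a\<in>UNIV. f (Inl a)) + (\<Sum>b\<in>UNIV. f (Inr b))"
  by (subst UNIV_Plus_UNIV[symmetric], subst sum.Plus) (simp_all add: o_def)

lemma norm_sq_blocks: "(norm v)\<^sup>2 = (norm (top_block v))\<^sup>2 + (norm (bottom_block v))\<^sup>2"
  by (simp add: power2_norm_eq_inner inner_vec_def sum_UNIV_Plus top_block_def bottom_block_def)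

lemma top_block_blockM:
  fixes H :: "real^'n^'n"
  shows "top_block (blockM \<beta> \<eta> H *v v)
    = (1 + \<beta>) *\<^sub>R (top_block v - \<eta> *\<^sub>R (H *v top_block v))
      - \<beta> *\<^sub>R (bottom_block v - \<eta> *\<^sub>R (H *v bottom_block v))"
proof -
  let ?I = "mat 1 :: real^'n^'n" and ?x = "top_block v" and ?y = "bottom_block v"
  have I: "(\<Sum>b\<in>UNIV. ?I $ a $ b * f b) = f a" for a and f :: "'n \<Rightarrow> real"
    by (simp add: mat_def mult_if_delta)
  have "(blockM \<beta> \<eta> H *v v) $ Inl a
      = (\<Sum>b\<in>UNIV. ((1 + \<beta>) * (?I $ a $ b - \<eta> * H $ a $ b)) * ?x $ b)
      + (\<Sum>b\<in>UNIV. (\<beta> * (- ?I $ a $ b + \<eta> * H $ a $ b)) * ?y $ b)" for a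
    by (simp add: matrix_vector_mult_def sum_UNIV_Plus blockM_def top_block_def bottom_block_def)
  also have "\<dots> a = (1 + \<beta>) * ((\<Sum>b\<in>UNIV. ?I $ a $ b * ?x $ b) - \<eta> * (\<Sum>b\<in>UNIV. H $ a $ b * ?x $ b))
      + \<beta> * (- (\<Sum>b\<in>UNIV. ?I $ a $ b * ?y $ b) + \<eta> * (\<Sum>b\<in>UNIV. H $ a $ b * ?y $ b))" for a
    by (simp add: algebra_simps sum.distrib sum_subtractf sum_distrib_left sum_negf)
  also have "\<dots> a = (1 + \<beta>) * (?x $ a - \<eta> * (H *v ?x) $ a) - \<beta> * (?y $ a - \<eta> * (H *v ?y) $ a)"
    for a
    by (simp only: I matrix_vector_mult_def vec_lambda_beta) (simp add: algebra_simps)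
  finally show ?thesis by (simp add: vec_eq_iff top_block_def)
qed

lemma bottom_block_blockM:
  fixes H :: "real^'n^'n"
  shows "bottom_block (blockM \<beta> \<eta> H *v v) = top_block v"
  by (simp add: vec_eq_iff matrix_vector_mult_def sum_UNIV_Plus blockM_def top_block_def
      bottom_block_def mat_def mult_if_delta)

lemma blockM_eigen_coordinates:
  fixes H :: "real^'n^'n"
  assumes "transpose H = H" "H *v u = \<mu> *\<^sub>R u"
  shows "top_block (blockM \<beta> \<eta> H *v v) \<bullet> u
      = (1 + \<beta>) * (1 - \<eta> * \<mu>) * (top_block v \<bullet> u) - \<beta> * (1 - \<eta> * \<mu>) * (bottom_block v \<bullet> u)"
    and "bottom_block (blockM \<beta> \<eta> H *v v) \<bullet> u = top_block v \<bullet> u"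
proof -
  have "(H *v w) \<bullet> u = \<mu> * (w \<bullet> u)" for w
    using inner_matrix_vector_symmetric[OF assms(1), of w u] assms(2) by simp
  then show "top_block (blockM \<beta> \<eta> H *v v) \<bullet> u
      = (1 + \<beta>) * (1 - \<eta> * \<mu>) * (top_block v \<bullet> u) - \<beta> * (1 - \<eta> * \<mu>) * (bottom_block v \<bullet> u)"
    by (simp add: top_block_blockM inner_diff_left algebra_simps)
  show "bottom_block (blockM \<beta> \<eta> H *v v) \<bullet> u = top_block v \<bullet> u"
    by (simp add: bottom_block_blockM)
qed

lemma norm_le_of_eigen_coordinate_bounds:
  fixes B :: "(real^'n) set"
  assumes B: "finite B" "span B = UNIV" "pairwise orthogonal B" "\<And>u. u \<in> B \<Longrightarrow> norm u = 1"
    and bound: "\<And>u. u \<in> B \<Longrightarrow> (top_block w \<bullet> u)\<^sup>2 + (bottom_block w \<bullet> u)\<^sup>2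
        \<le> c\<^sup>2 * ((top_block w0 \<bullet> u)\<^sup>2 + (bottom_block w0 \<bullet> u)\<^sup>2)"
    and "0 \<le> c"
  shows "norm w \<le> c * norm w0"
proof -
  have parseval: "(norm x)\<^sup>2 = (\<Sum>u\<in>B. (x \<bullet> u)\<^sup>2)" for x :: "real^'n"
    using norm_sq_eq_sum_inner_sq[OF B(3,4) _ B(1)] B(2) by simp
  have coords: "(norm z)\<^sup>2 = (\<Sum>u\<in>B. (top_block z \<bullet> u)\<^sup>2 + (bottom_block z \<bullet> u)\<^sup>2)" for z
    by (simp only: norm_sq_blocks parseval sum.distrib)
  have "(norm w)\<^sup>2 \<le> (\<Sum>u\<in>B. c\<^sup>2 * ((top_block w0 \<bullet> u)\<^sup>2 + (bottom_block w0 \<bullet> u)\<^sup>2))"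
    unfolding coords[of w] using bound by (rule sum_mono)
  also have "\<dots> = (c * norm w0)\<^sup>2"
    by (simp only: coords[of w0] sum_distrib_left power_mult_distrib)
  finally have "(norm w)\<^sup>2 \<le> (c * norm w0)\<^sup>2" .
  moreover have "0 \<le> c * norm w0" using \<open>0 \<le> c\<close> by simp
  ultimately show ?thesis by (rule power2_le_imp_le)
qed

lemma quadratic_form_le_sum_sq:
  fixes p q \<tau> \<delta> :: real
  assumes "\<tau>\<^sup>2 \<le> 4 * \<delta>"
  shows "p\<^sup>2 - \<tau> * p * q + \<delta> * q\<^sup>2 \<le> (1 + \<delta>) * (p\<^sup>2 + q\<^sup>2)"
proof -
  have "(1 + \<delta>) * (p\<^sup>2 + q\<^sup>2) - (p\<^sup>2 - \<tau> * p * q + \<delta> * q\<^sup>2)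
      = (\<tau> * p + 2 * q)\<^sup>2 / 4 + (\<delta> - \<tau>\<^sup>2 / 4) * p\<^sup>2"
    by (simp add: field_simps power2_eq_square)
  also have "\<dots> \<ge> 0" using assms by (intro add_nonneg_nonneg mult_nonneg_nonneg) auto
  finally show ?thesis by simp
qed

lemma sum_sq_le_quadratic_form:
  fixes p q \<tau> \<delta> :: real
  shows "(4 * \<delta> - \<tau>\<^sup>2) * (p\<^sup>2 + q\<^sup>2) \<le> 4 * (1 + \<delta>) * (p\<^sup>2 - \<tau> * p * q + \<delta> * q\<^sup>2)"
proof -
  define X where "X = 4 * (1 + \<delta>) * (p\<^sup>2 - \<tau> * p * q + \<delta> * q\<^sup>2) - (4 * \<delta> - \<tau>\<^sup>2) * (p\<^sup>2 + q\<^sup>2)"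
  have "(4 + \<tau>\<^sup>2) * X = ((4 + \<tau>\<^sup>2) * p - 2 * (1 + \<delta>) * \<tau> * q)\<^sup>2 + (4 * \<delta> - \<tau>\<^sup>2)\<^sup>2 * q\<^sup>2"
    unfolding X_def by (simp add: algebra_simps power2_eq_square)
  then have "0 \<le> (4 + \<tau>\<^sup>2) * X" by simp
  moreover have "0 < 4 + \<tau>\<^sup>2" by (simp add: add_pos_nonneg)
  ultimately have "0 \<le> X" by (simp add: zero_le_mult_iff)
  then show ?thesis unfolding X_def by simp
qed

lemma second_order_recurrence_bound:
  fixes p q :: "nat \<Rightarrow> real" and \<tau> \<delta> :: real
  assumes g: "0 < 4 * \<delta> - \<tau>\<^sup>2"
    and rec: "\<And>t. t < T \<Longrightarrow> p (Suc t) = \<tau> * p t - \<delta> * q t \<and> q (Suc t) = p t"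
    and "k \<le> T"
  shows "(p k)\<^sup>2 + (q k)\<^sup>2 \<le> 4 * (1 + \<delta>)\<^sup>2 / (4 * \<delta> - \<tau>\<^sup>2) * \<delta> ^ k * ((p 0)\<^sup>2 + (q 0)\<^sup>2)"
proof -
  define Q where "Q t = (p t)\<^sup>2 - \<tau> * p t * q t + \<delta> * (q t)\<^sup>2" for t
  have "0 \<le> \<delta>" using g by (smt (verit) zero_le_power2)
  have Q_pow: "Q t = \<delta> ^ t * Q 0" if "t \<le> T" for t
    using that
  proof (induction t)
    case (Suc t)
    then have p: "p (Suc t) = \<tau> * p t - \<delta> * q t" and q: "q (Suc t) = p t" using rec by auto
    have "Q (Suc t) = \<delta> * Q t" unfolding Q_def p q by (simp add: algebra_simps power2_eq_square)
    with Suc show ?case by simp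
  qed simp
  have "(4 * \<delta> - \<tau>\<^sup>2) * ((p k)\<^sup>2 + (q k)\<^sup>2) \<le> 4 * (1 + \<delta>) * (\<delta> ^ k * Q 0)"
    using sum_sq_le_quadratic_form[of \<delta> \<tau> "p k" "q k"] Q_pow[OF \<open>k \<le> T\<close>] by (simp add: Q_def)
  also have "\<dots> \<le> 4 * (1 + \<delta>) * (\<delta> ^ k * ((1 + \<delta>) * ((p 0)\<^sup>2 + (q 0)\<^sup>2)))"
    using quadratic_form_le_sum_sq[of \<tau> \<delta> "p 0" "q 0"] g \<open>0 \<le> \<delta>\<close>
    by (intro mult_left_mono) (auto simp: Q_def)
  finally show ?thesis
    using g by (simp add: field_simps power2_eq_square)
qed

lemma min_gfun_le:
  assumes "ylo \<le> y" "y \<le> yhi"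
  shows "min (gfun b ylo) (gfun b yhi) \<le> gfun b y"
proof (cases "ylo = yhi")
  case False
  let ?m = "min (gfun b ylo) (gfun b yhi)"
  have "(yhi - ylo) * gfun b y = (yhi - y) * gfun b ylo + (y - ylo) * gfun b yhi
      + (1 + b)\<^sup>2 * ((yhi - y) * (y - ylo) * (yhi - ylo))"
    by (simp add: gfun_def algebra_simps power2_eq_square)
  moreover have "(yhi - y) * ?m \<le> (yhi - y) * gfun b ylo" "(y - ylo) * ?m \<le> (y - ylo) * gfun b yhi"
    using assms by (intro mult_left_mono; simp)+
  moreover have "0 \<le> (1 + b)\<^sup>2 * ((yhi - y) * (y - ylo) * (yhi - ylo))" using assms by simp
  ultimately have "(yhi - ylo) * ?m \<le> (yhi - ylo) * gfun b y" by (simp add: algebra_simps)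
  with False assms show ?thesis by simp
qed (use assms in simp)

lemma gfun_pos_imp_pos:
  assumes "0 < gfun x y"
  shows "0 < x * (1 - y)"
proof -
  have "gfun x y = 4 * (x * (1 - y)) - ((1 + x) * (1 - y))\<^sup>2" by (simp add: gfun_def)
  with assms show ?thesis by (smt (verit) zero_le_power2)
qed

lemma blockM_mode_bound:
  fixes H :: "real^'n^'n" and v :: "nat \<Rightarrow> real^('n + 'n)"
  assumes sym: "transpose H = H" and eig: "H *v u = \<mu> *\<^sub>R u"
    and rec: "\<And>t. t < T \<Longrightarrow> v (Suc t) = blockM \<beta> \<eta> H *v v t"
    and m: "0 < m" "m \<le> gfun \<beta> (\<eta> * \<mu>)" and d: "\<beta> * (1 - \<eta> * \<mu>) \<le> d"
    and "k \<le> T"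
  shows "(top_block (v k) \<bullet> u)\<^sup>2 + (bottom_block (v k) \<bullet> u)\<^sup>2
    \<le> ((2 * d + 2) / sqrt m * sqrt d ^ k)\<^sup>2
       * ((top_block (v 0) \<bullet> u)\<^sup>2 + (bottom_block (v 0) \<bullet> u)\<^sup>2)"
proof -
  define \<delta> where "\<delta> = \<beta> * (1 - \<eta> * \<mu>)"
  define \<tau> where "\<tau> = (1 + \<beta>) * (1 - \<eta> * \<mu>)"
  have g: "gfun \<beta> (\<eta> * \<mu>) = 4 * \<delta> - \<tau>\<^sup>2" by (simp add: gfun_def \<delta>_def \<tau>_def)
  have "0 < \<delta>" unfolding \<delta>_def using m by (intro gfun_pos_imp_pos) simp
  have "(top_block (v k) \<bullet> u)\<^sup>2 + (bottom_block (v k) \<bullet> u)\<^sup>2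
      \<le> 4 * (1 + \<delta>)\<^sup>2 / (4 * \<delta> - \<tau>\<^sup>2) * \<delta> ^ k * ((top_block (v 0) \<bullet> u)\<^sup>2 + (bottom_block (v 0) \<bullet> u)\<^sup>2)"
    using m g \<open>k \<le> T\<close>
    by (intro second_order_recurrence_bound)
      (auto simp: rec blockM_eigen_coordinates[OF sym eig] \<delta>_def \<tau>_def)
  also have "\<dots> \<le> 4 * (1 + d)\<^sup>2 / m * d ^ k * ((top_block (v 0) \<bullet> u)\<^sup>2 + (bottom_block (v 0) \<bullet> u)\<^sup>2)"
    using m g d \<open>0 < \<delta>\<close> unfolding \<delta>_def[symmetric]
    by (intro mult_right_mono mult_mono frac_le power_mono) auto
  also have "4 * (1 + d)\<^sup>2 / m * d ^ k = ((2 * d + 2) / sqrt m * sqrt d ^ k)\<^sup>2"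
    using m d \<open>0 < \<delta>\<close>
    by (simp add: power_mult_distrib power_divide real_sqrt_power[symmetric] algebra_simps
        power2_eq_square \<delta>_def)
  finally show ?thesis .
qed

lemma blockM_norm_bound:
  fixes H :: "real^'n^'n" and v :: "nat \<Rightarrow> real^('n + 'n)"
  assumes sym: "transpose H = H"
    and B: "finite B" "span B = UNIV" "pairwise orthogonal B" "\<And>u. u \<in> B \<Longrightarrow> norm u = 1"
      "\<And>u. u \<in> B \<Longrightarrow> H *v u = \<mu> u *\<^sub>R u"
    and m: "0 < m" "\<And>u. u \<in> B \<Longrightarrow> m \<le> gfun \<beta> (\<eta> * \<mu> u)"
    and d: "0 \<le> d" "\<And>u. u \<in> B \<Longrightarrow> \<beta> * (1 - \<eta> * \<mu> u) \<le> d"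
    and rec: "\<And>t. t < T \<Longrightarrow> v (Suc t) = blockM \<beta> \<eta> H *v v t"
    and "k \<le> T"
  shows "norm (v k) \<le> (2 * d + 2) / sqrt m * sqrt d ^ k * norm (v 0)"
proof (rule norm_le_of_eigen_coordinate_bounds[OF B(1-4)])
  fix u assume "u \<in> B"
  with m d \<open>k \<le> T\<close> show "(top_block (v k) \<bullet> u)\<^sup>2 + (bottom_block (v k) \<bullet> u)\<^sup>2
      \<le> ((2 * d + 2) / sqrt m * sqrt d ^ k)\<^sup>2 * ((top_block (v 0) \<bullet> u)\<^sup>2 + (bottom_block (v 0) \<bullet> u)\<^sup>2)"
    by (intro blockM_mode_bound[OF sym B(5)[OF \<open>u \<in> B\<close>]]) (simp_all add: rec)
qed (use m(1) d(1) in \<open>auto intro!: mult_nonneg_nonneg divide_nonneg_nonneg\<close>)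

theorem lemma2:
  fixes H :: "real^'n^'n" and \<eta> \<beta> :: real and T :: nat
    and v :: "nat \<Rightarrow> real^('n + 'n)"
  assumes H: "symmetric_pd H"
    and eta_pos: "0 < \<eta>" and eta_le: "\<eta> \<le> 1 / lambda_max H"
    and beta_lt: "\<beta> < 1"
    and beta_ge: "\<beta> \<ge> (1 - sqrt (\<eta> * lambda_min H)) / (1 + sqrt (\<eta> * lambda_min H))"
    and C_finite: "0 < min (gfun \<beta> (\<eta> * lambda_min H)) (gfun \<beta> (\<eta> * lambda_max H))"
    and rec: "\<And>t. 1 \<le> t \<Longrightarrow> t \<le> T \<Longrightarrow> v t = blockM \<beta> \<eta> H *v v (t - 1)"
  shows "\<forall>k \<le> T. norm (v k) \<le>
      ((2 * \<beta> * (1 - \<eta> * lambda_min H) + 2)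
         / sqrt (min (gfun \<beta> (\<eta> * lambda_min H)) (gfun \<beta> (\<eta> * lambda_max H))))
      * (sqrt (\<beta> * (1 - \<eta> * lambda_min H))) ^ k * norm (v 0)"
proof -
  obtain B \<mu> where B: "finite B" "span B = UNIV" "pairwise orthogonal B"
    "\<And>u. u \<in> B \<Longrightarrow> norm u = 1" "\<And>u. u \<in> B \<Longrightarrow> H *v u = \<mu> u *\<^sub>R u"
    and spectrum: "\<And>u. u \<in> B \<Longrightarrow> lambda_min H \<le> \<mu> u" "\<And>u. u \<in> B \<Longrightarrow> \<mu> u \<le> lambda_max H"
    and lambda: "0 < lambda_min H" "lambda_min H \<le> lambda_max H"
    using symmetric_pd_eigenbasis[OF H] by blast
  define m where "m = min (gfun \<beta> (\<eta> * lambda_min H)) (gfun \<beta> (\<eta> * lambda_max H))"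
  define d where "d = \<beta> * (1 - \<eta> * lambda_min H)"
  have "0 < d" unfolding d_def using C_finite by (intro gfun_pos_imp_pos) simp
  have "\<eta> * lambda_min H \<le> \<eta> * lambda_max H" using lambda eta_pos by simp
  also have "\<dots> \<le> 1" using eta_le lambda by (simp add: le_divide_eq mult.commute)
  finally have "0 \<le> \<beta>" using \<open>0 < d\<close> unfolding d_def by (simp add: zero_less_mult_iff)
  have "norm (v k) \<le> (2 * d + 2) / sqrt m * sqrt d ^ k * norm (v 0)" if "k \<le> T" for k
  proof (rule blockM_norm_bound[OF _ B _ _ _ _ _ that])
    show "transpose H = H" using H by (simp add: symmetric_pd_def)
    show "0 < m" using C_finite by (simp add: m_def)
    show "m \<le> gfun \<beta> (\<eta> * \<mu> u)" if "u \<in> B" for u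
      unfolding m_def using spectrum[OF that] eta_pos by (intro min_gfun_le) simp_all
    show "\<beta> * (1 - \<eta> * \<mu> u) \<le> d" if "u \<in> B" for u
      unfolding d_def using spectrum(1)[OF that] eta_pos \<open>0 \<le> \<beta>\<close> by (intro mult_left_mono) simp_all
    show "v (Suc t) = blockM \<beta> \<eta> H *v v t" if "t < T" for t using rec[of "Suc t"] that by simp
    show "0 \<le> d" using \<open>0 < d\<close> by simp
  qed
  then show ?thesis by (simp add: m_def d_def mult.assoc)
qed

end
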